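(* Let $G$ be the directed graph with distinct vertices $v_1,v_2,\dots$ and $w_1,w_2,\dots$, and edges $v_i\to v_{i+1}$ and $w_i\to v_i$ for all $i\ge1$ (so each $w_i$ is parentless with lone child $v_i$), with birthdates $t(v_i)=i$ and $t(w_i)=i-\tfrac12$. Then $(G,t)$ is an infinite biosphere, and $v_1$ does not belong to any maximal element of $\mathrm{IAP}\cap\mathrm{CONV}\cap\mathrm{REF}$.
   Context: An infinite biosphere is a directed graph $G$ together with a function $t$ assigning a real number $t(v)$ to each vertex, such that: (1) if $v$ is a parent of $w$ (edge from $v$ to $w$) then $t(v)<t(w)$; (2) for every $r\in\mathbb R$ at most finitely many vertices $v$ have $t(v)<r$; (3) every vertex has finitely many children; (4) $G$ is infinite. $v$ is an ancestor of $w$ (and $w$ a descendant of $v$) if there is a directed path $v=v_1,\dots,v_n=w$ with $n>1$. $\mathrm{IAP}$: sets $S$ of vertices such that no $v\in S$ has both infinitely many descendants in $S$ and infinitely many non-descendants in $S$. $\mathrm{CONV}$: sets $S$ such that every vertex having an ancestor in $S$ and a descendant in $S$ lies in $S$. $\mathrm{REF}$: sets $S$ such that every $v\in S$ with infinitely many descendants in $G$ has infinitely many descendants in $S$. A maximal element of a family of sets is a member not properly contained in any other member. *)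

theory Defs
  imports Complex_Main
begin

text \<open>A directed graph is given by a vertex set VS and an edge relation E
  (E v w means: v is a parent of w, i.e. there is an edge from v to w).\<close>

definition infinite_biosphere :: "'a set \<Rightarrow> ('a \<Rightarrow> 'a \<Rightarrow> bool) \<Rightarrow> ('a \<Rightarrow> real) \<Rightarrow> bool" where
  "infinite_biosphere VS E t \<longleftrightarrow>
     (\<forall>v w. E v w \<longrightarrow> v \<in> VS \<and> w \<in> VS) \<and>
     (\<forall>v w. E v w \<longrightarrow> t v < t w) \<and>
     (\<forall>r::real. finite {v \<in> VS. t v < r}) \<and>
     (\<forall>v \<in> VS. finite {w. E v w}) \<and>
     infinite VS"

definition ancestor :: "('a \<Rightarrow> 'a \<Rightarrow> bool) \<Rightarrow> 'a \<Rightarrow> 'a \<Rightarrow> bool" where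
  "ancestor E v w \<longleftrightarrow> (v, w) \<in> {(a, b). E a b}\<^sup>+"

definition descendants :: "('a \<Rightarrow> 'a \<Rightarrow> bool) \<Rightarrow> 'a \<Rightarrow> 'a set" where
  "descendants E v = {w. ancestor E v w}"

definition IAP :: "'a set \<Rightarrow> ('a \<Rightarrow> 'a \<Rightarrow> bool) \<Rightarrow> 'a set set" where
  "IAP VS E = {S. S \<subseteq> VS \<and>
     (\<forall>v \<in> S. \<not> (infinite (descendants E v \<inter> S) \<and> infinite (S - descendants E v)))}"

definition CONV :: "'a set \<Rightarrow> ('a \<Rightarrow> 'a \<Rightarrow> bool) \<Rightarrow> 'a set set" where
  "CONV VS E = {S. S \<subseteq> VS \<and>
     (\<forall>x \<in> VS. (\<exists>a \<in> S. ancestor E a x) \<and> (\<exists>d \<in> S. ancestor E x d) \<longrightarrow> x \<in> S)}"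

definition REF :: "'a set \<Rightarrow> ('a \<Rightarrow> 'a \<Rightarrow> bool) \<Rightarrow> 'a set set" where
  "REF VS E = {S. S \<subseteq> VS \<and>
     (\<forall>v \<in> S. infinite (descendants E v) \<longrightarrow> infinite (descendants E v \<inter> S))}"

definition maximal_in :: "'a set set \<Rightarrow> 'a set \<Rightarrow> bool" where
  "maximal_in F S \<longleftrightarrow> S \<in> F \<and> \<not> (\<exists>T \<in> F. S \<subset> T)"

datatype vtx = Vv nat | Ww nat

definition exVS :: "vtx set" where
  "exVS = {Vv i | i. i \<ge> 1} \<union> {Ww i | i. i \<ge> 1}"

definition exE :: "vtx \<Rightarrow> vtx \<Rightarrow> bool" where
  "exE x y \<longleftrightarrow> (\<exists>i \<ge> 1. x = Vv i \<and> y = Vv (i + 1)) \<or> (\<exists>i \<ge> 1. x = Ww i \<and> y = Vv i)"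

fun ext :: "vtx \<Rightarrow> real" where
  "ext (Vv i) = real i"
| "ext (Ww i) = real i - 1/2"

end

theory Submission
  imports Defs
begin

text \<open>A set S in IAP \<inter> CONV \<inter> REF containing v_1 must contain infinitely many descendants of v_1 (REF),
  hence all v_j (CONV), and then IAP at v_1 leaves room for only finitely many w_i.
  Conversely, every set consisting of all v_j and finitely many w_i is closed under
  descendants and has only finitely many non-descendants of each of its vertices, so it lies
  in the family.
  Adding one more w_i to S therefore gives a strictly larger member, and S is never maximal.\<close>

abbreviation IAP_CONV_REF :: "'a set \<Rightarrow> ('a \<Rightarrow> 'a \<Rightarrow> bool) \<Rightarrow> 'a set set" where
  "IAP_CONV_REF VS E \<equiv> IAP VS E \<inter> CONV VS E \<inter> REF VS E"

lemma REF_infinite_descendants_inter: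
  assumes "S \<in> REF VS E" "v \<in> S" "infinite (descendants E v)"
  shows "infinite (descendants E v \<inter> S)"
  using assms by (auto simp: REF_def)

lemma IAP_REF_finite_nondescendants:
  assumes "S \<in> IAP VS E" "S \<in> REF VS E" "v \<in> S" "infinite (descendants E v)"
  shows "finite (S - descendants E v)"
  using assms REF_infinite_descendants_inter[OF assms(2-4)] by (auto simp: IAP_def)

lemma IAP_CONV_REF_if_descendant_closed:
  assumes "T \<subseteq> VS"
    and closed: "\<And>v. v \<in> T \<Longrightarrow> descendants E v \<subseteq> T"
    and "\<And>v. v \<in> T \<Longrightarrow> finite (T - descendants E v)"
  shows "T \<in> IAP_CONV_REF VS E"
proof -
  have "T \<in> IAP VS E" using assms by (auto simp: IAP_def)
  moreover have "T \<in> CONV VS E"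
    using assms by (auto simp: CONV_def descendants_def)
  moreover have "descendants E v \<inter> T = descendants E v" if "v \<in> T" for v
    using closed[OF that] by blast
  then have "T \<in> REF VS E" using assms by (auto simp: REF_def)
  ultimately show ?thesis by blast
qed

fun idx :: "vtx \<Rightarrow> nat" where
  "idx (Vv i) = i"
| "idx (Ww i) = i"

lemma finite_Vv_image_iff [simp]: "finite (Vv ` A) \<longleftrightarrow> finite A"
  by (simp add: finite_image_iff inj_on_def)

lemma finite_Ww_image_iff [simp]: "finite (Ww ` A) \<longleftrightarrow> finite A"
  by (simp add: finite_image_iff inj_on_def)

lemma finite_idx_le: "finite {v. idx v \<le> n}"
proof -
  have "v \<in> Vv ` {..n} \<union> Ww ` {..n}" if "idx v \<le> n" for v
    using that by (cases v) auto
  then have "{v. idx v \<le> n} \<subseteq> Vv ` {..n} \<union> Ww ` {..n}" by blast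
  then show ?thesis by (rule finite_subset) simp
qed

lemma Vv_trancl_exE:
  assumes "1 \<le> i" "i < j"
  shows "(Vv i, Vv j) \<in> {(a, b). exE a b}\<^sup>+"
  using assms(2)
proof (induction j)
  case 0
  then show ?case by simp
next
  case (Suc j)
  have step: "(Vv j, Vv (Suc j)) \<in> {(a, b). exE a b}" if "1 \<le> j"
    using that by (auto simp: exE_def)
  show ?case
  proof (cases "i = j")
    case True
    then show ?thesis using assms(1) step by auto
  next
    case False
    with Suc have "(Vv i, Vv j) \<in> {(a, b). exE a b}\<^sup>+" by simp
    then show ?thesis using False Suc.prems assms(1) step by (simp add: trancl_into_trancl)
  qed
qed

lemma ancestor_exE_iff:
  "ancestor exE x y \<longleftrightarrow>
     (\<exists>i j. x = Vv i \<and> y = Vv j \<and> 1 \<le> i \<and> i < j) \<or>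
     (\<exists>i j. x = Ww i \<and> y = Vv j \<and> 1 \<le> i \<and> i \<le> j)"
  (is "_ \<longleftrightarrow> ?R x y")
proof
  assume "ancestor exE x y"
  then have "(x, y) \<in> {(a, b). exE a b}\<^sup>+" by (simp add: ancestor_def)
  then show "?R x y"
    by (induction rule: trancl_induct) (auto simp: exE_def)
next
  assume "?R x y"
  then show "ancestor exE x y"
  proof (elim disjE exE conjE)
    fix i j assume "x = Vv i" "y = Vv j" "1 \<le> i" "i < j"
    then show ?thesis using Vv_trancl_exE by (simp add: ancestor_def)
  next
    fix i j assume ij: "x = Ww i" "y = Vv j" "1 \<le> i" "i \<le> j"
    have edge: "(Ww i, Vv i) \<in> {(a, b). exE a b}" using ij by (auto simp: exE_def)
    show ?thesis
    proof (cases "i = j")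
      case True
      then show ?thesis using edge ij by (auto simp: ancestor_def)
    next
      case False
      then have "(Vv i, Vv j) \<in> {(a, b). exE a b}\<^sup>+" using Vv_trancl_exE ij by simp
      then show ?thesis using edge ij unfolding ancestor_def by (meson trancl_into_trancl2)
    qed
  qed
qed

lemma descendants_Vv: "1 \<le> i \<Longrightarrow> descendants exE (Vv i) = Vv ` {i<..}"
  by (auto simp: descendants_def ancestor_exE_iff)

lemma descendants_Ww: "1 \<le> i \<Longrightarrow> descendants exE (Ww i) = Vv ` {i..}"
  by (auto simp: descendants_def ancestor_exE_iff)

lemma descendants_exE_subset: "descendants exE v \<subseteq> {Vv j | j. 1 \<le> j}"
  by (auto simp: descendants_def ancestor_exE_iff)

lemma exVS_cases:
  assumes "v \<in> exVS"
  obtains i where "1 \<le> i" "v = Vv i" | i where "1 \<le> i" "v = Ww i"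
  using assms by (auto simp: exVS_def)

lemma infinite_biosphere_example: "infinite_biosphere exVS exE ext"
proof -
  have "finite {v \<in> exVS. ext v < r}" for r
  proof (rule finite_subset[OF _ finite_idx_le])
    have "idx v \<le> nat \<lceil>r\<rceil>" if "ext v < r" for v
    proof -
      have "real (idx v) - 1/2 \<le> ext v"
        by (cases v) simp_all
      then have "real (idx v) < real (Suc (nat \<lceil>r\<rceil>))"
        using that of_nat_ceiling[of r] unfolding of_nat_Suc by linarith
      then show ?thesis by simp
    qed
    then show "{v \<in> exVS. ext v < r} \<subseteq> {v. idx v \<le> nat \<lceil>r\<rceil>}"
      by blast
  qed
  moreover have "finite {w. exE v w}" for v
    by (rule finite_subset[of _ "{Vv (idx v), Vv (idx v + 1)}"]) (auto simp: exE_def)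
  moreover have "infinite exVS"
  proof
    assume "finite exVS"
    moreover have "Vv ` {1..} \<subseteq> exVS" by (auto simp: exVS_def)
    ultimately show False by (meson finite_Vv_image_iff finite_subset infinite_Ici)
  qed
  ultimately show ?thesis
    by (auto simp: infinite_biosphere_def exE_def exVS_def)
qed

lemma IAP_CONV_REF_exampleI:
  assumes "T \<subseteq> exVS" "\<And>j. 1 \<le> j \<Longrightarrow> Vv j \<in> T" "finite {i. Ww i \<in> T}"
  shows "T \<in> IAP_CONV_REF exVS exE"
proof (rule IAP_CONV_REF_if_descendant_closed)
  show "descendants exE v \<subseteq> T" for v
    using descendants_exE_subset assms(2) by blast
  fix v assume "v \<in> T"
  then have "v \<in> exVS" using assms(1) by blast
  have "T - descendants exE v \<subseteq> Vv ` {..idx v} \<union> Ww ` {i. Ww i \<in> T}"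
  proof
    fix x assume x: "x \<in> T - descendants exE v"
    show "x \<in> Vv ` {..idx v} \<union> Ww ` {i. Ww i \<in> T}"
    proof (cases x)
      case (Vv j)
      have "\<not> idx v < j"
        using \<open>v \<in> exVS\<close> x Vv by (cases rule: exVS_cases) (auto simp: descendants_Vv descendants_Ww)
      then show ?thesis using Vv by auto
    next
      case (Ww j)
      then show ?thesis using x by auto
    qed
  qed
  then show "finite (T - descendants exE v)"
    by (rule finite_subset) (simp add: assms(3))
qed (use assms(1) in blast)

lemma IAP_CONV_REF_exampleD:
  assumes S: "S \<in> IAP_CONV_REF exVS exE" and v1: "Vv 1 \<in> S"
  shows "\<And>j. 1 \<le> j \<Longrightarrow> Vv j \<in> S" and "finite {i. Ww i \<in> S}"
proof -
  have v1_infinite: "infinite (descendants exE (Vv 1))"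
    by (simp add: descendants_Vv infinite_Ioi)
  have many: "infinite (descendants exE (Vv 1) \<inter> S)"
    using REF_infinite_descendants_inter[OF _ v1 v1_infinite] S by blast
  show "Vv j \<in> S" if j: "1 \<le> j" for j
  proof (cases "j = 1")
    case True
    then show ?thesis using v1 by simp
  next
    case False
    have "\<not> descendants exE (Vv 1) \<inter> S \<subseteq> Vv ` {..j}"
      using many finite_subset by blast
    then obtain k where k: "Vv k \<in> S" "j < k"
      by (force simp: descendants_Vv not_le)
    have "ancestor exE (Vv 1) (Vv j)" "ancestor exE (Vv j) (Vv k)"
      using False j k by (auto simp: ancestor_exE_iff)
    moreover have "Vv j \<in> exVS" using j by (auto simp: exVS_def)
    ultimately show ?thesis
      using S v1 k(1) by (auto simp: CONV_def)
  qed
  have "finite (S - descendants exE (Vv 1))"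
    using IAP_REF_finite_nondescendants[OF _ _ v1 v1_infinite] S by blast
  moreover have "Ww ` {i. Ww i \<in> S} \<subseteq> S - descendants exE (Vv 1)"
    by (auto simp: descendants_Vv)
  ultimately show "finite {i. Ww i \<in> S}"
    using finite_subset finite_Ww_image_iff by blast
qed

theorem mainTheorem11:
  shows "infinite_biosphere exVS exE ext \<and>
    \<not> (\<exists>S. maximal_in (IAP exVS exE \<inter> CONV exVS exE \<inter> REF exVS exE) S \<and> Vv 1 \<in> S)"
proof (intro conjI notI infinite_biosphere_example, elim exE conjE)
  fix S assume max: "maximal_in (IAP_CONV_REF exVS exE) S" and v1: "Vv 1 \<in> S"
  then have S: "S \<in> IAP_CONV_REF exVS exE" by (simp add: maximal_in_def)
  note shape = IAP_CONV_REF_exampleD[OF S v1]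
  obtain m where "\<forall>i \<in> {i. Ww i \<in> S}. i < m"
    using shape(2) finite_nat_set_iff_bounded by blast
  then have m: "Ww (Suc m) \<notin> S" by auto
  define T where "T = insert (Ww (Suc m)) S"
  have "T \<in> IAP_CONV_REF exVS exE"
  proof (rule IAP_CONV_REF_exampleI)
    show "T \<subseteq> exVS" using S by (auto simp: T_def exVS_def IAP_def)
    show "Vv j \<in> T" if "1 \<le> j" for j using shape(1)[OF that] by (simp add: T_def)
    have "{i. Ww i \<in> T} = insert (Suc m) {i. Ww i \<in> S}" by (auto simp: T_def)
    then show "finite {i. Ww i \<in> T}" using shape(2) by simp
  qed
  moreover have "S \<subset> T" using m by (auto simp: T_def)
  ultimately show False using max by (auto simp: maximal_in_def)
qed

end
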